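(* For any problem instance $(F,G)$, under full or partial information feedback, \[\mathrm{OPT}-O\big(\sqrt{T\log T}\big)\ \le\ \mathbb E_{\bm v,\bm p,\bm\gamma}\big[R^{\mathrm{thr}}(\bm v,\bm p,\bm\gamma)\big]\ \le\ \mathrm{OPT},\] where $R^{\mathrm{thr}}$ denotes the total revenue of the optimal online throttling strategy.
   Context: Model: constants $\bar v>0$, $\rho\in(0,\bar v]$; $T$ rounds; budget $B=\rho T$. Values $v_t$ i.i.d. from a distribution $F$ on $[0,\bar v]$; highest competing bids $p_t$ i.i.d. from a distribution $G$ on $[0,\bar v]$, independent of values, unknown to the buyer. Each round the buyer chooses $x_t\in\{0,1\}$ after seeing $v_t$, receiving $x_t(v_t-p_t)^+$ and paying $x_tp_t\mathbf 1[v_t\ge p_t]$. An online throttling strategy sets $x_t=\beta_t(\mathcal H_t,v_t,\gamma_t)$, with internal randomness $\gamma_t$ and history $\mathcal H_t=(v_\tau,x_\tau,p_\tau)_{\tau<t}$ (full information) or $(v_\tau,x_\tau,x_\tau p_\tau)_{\tau<t}$ (partial information); total payment must stay within $B$; its revenue is $R^\beta=\sum_{t=1}^{T_0}x_t(v_t-p_t)^+$ with $T_0$ the last round with $x_t=1$. The optimal throttling strategy is one maximizing the expected total revenue $\mathbb E_{\bm v,\bm p,\bm\gamma}[R^\beta]$ in the given information model. $\mathrm{OPT}=T\max_{\pi:[0,\bar v]\to[0,1]}\mathbb E_{v\sim F,p\sim G}[\pi(v)(v-p)^+]$ s.t. $\mathbb E_{v\sim F,p\sim G}[\pi(v)p\mathbf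 1[v\ge p]]\le\rho$. *)

theory Defs
  imports "HOL-Probability.Probability"
begin

datatype info = Full | Partial

definition observe :: "info \<Rightarrow> bool \<Rightarrow> real \<Rightarrow> real" where
  "observe I x p = (case I of Full \<Rightarrow> p | Partial \<Rightarrow> (if x then p else 0))"

text \<open>A throttling strategy: round index t (0-based), history (list of past
  (v_tau, x_tau, observation_tau) for tau < t), current value v_t, internal randomness gamma_t;
  returns x_t.\<close>
type_synonym strategy = "nat \<Rightarrow> (real \<times> bool \<times> real) list \<Rightarrow> real \<Rightarrow> real \<Rightarrow> bool"

text \<open>An outcome: omega t = (v_t, p_t, gamma_t).\<close>
type_synonym outcome = "nat \<Rightarrow> real \<times> real \<times> real"

definition history :: "info \<Rightarrow> outcome \<Rightarrow> bool list \<Rightarrow> (real \<times> bool \<times> real) list" where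
  "history I \<omega> ds =
     map (\<lambda>\<tau>. (fst (\<omega> \<tau>), ds ! \<tau>, observe I (ds ! \<tau>) (fst (snd (\<omega> \<tau>))))) [0..<length ds]"

primrec decisions :: "info \<Rightarrow> strategy \<Rightarrow> outcome \<Rightarrow> nat \<Rightarrow> bool list" where
  "decisions I \<beta> \<omega> 0 = []"
| "decisions I \<beta> \<omega> (Suc t) =
     (let ds = decisions I \<beta> \<omega> t
      in ds @ [\<beta> t (history I \<omega> ds) (fst (\<omega> t)) (snd (snd (\<omega> t)))])"

definition decision :: "info \<Rightarrow> strategy \<Rightarrow> outcome \<Rightarrow> nat \<Rightarrow> bool" where
  "decision I \<beta> \<omega> t = decisions I \<beta> \<omega> (Suc t) ! t"

definition revenue :: "info \<Rightarrow> strategy \<Rightarrow> nat \<Rightarrow> outcome \<Rightarrow> real" where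
  "revenue I \<beta> T \<omega> =
     (\<Sum>t<T. if decision I \<beta> \<omega> t then max 0 (fst (\<omega> t) - fst (snd (\<omega> t))) else 0)"

definition payment :: "info \<Rightarrow> strategy \<Rightarrow> nat \<Rightarrow> outcome \<Rightarrow> real" where
  "payment I \<beta> T \<omega> =
     (\<Sum>t<T. if decision I \<beta> \<omega> t \<and> fst (snd (\<omega> t)) \<le> fst (\<omega> t) then fst (snd (\<omega> t)) else 0)"

definition budget_feasible :: "info \<Rightarrow> real \<Rightarrow> real \<Rightarrow> nat \<Rightarrow> strategy \<Rightarrow> bool" where
  "budget_feasible I vbar \<rho> T \<beta> \<longleftrightarrow>
     (\<forall>\<omega>. (\<forall>t<T. fst (\<omega> t) \<in> {0..vbar} \<and> fst (snd (\<omega> t)) \<in> {0..vbar}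
                \<and> snd (snd (\<omega> t)) \<in> {0..1})
          \<longrightarrow> payment I \<beta> T \<omega> \<le> \<rho> * real T)"

definition sample_space :: "real measure \<Rightarrow> real measure \<Rightarrow> nat \<Rightarrow> outcome measure" where
  "sample_space F G T =
     PiM {..<T} (\<lambda>_. F \<Otimes>\<^sub>M (G \<Otimes>\<^sub>M uniform_measure lborel {0..1}))"

definition admissible :: "info \<Rightarrow> real \<Rightarrow> real \<Rightarrow> real measure \<Rightarrow> real measure \<Rightarrow> nat \<Rightarrow> strategy \<Rightarrow> bool" where
  "admissible I vbar \<rho> F G T \<beta> \<longleftrightarrow>
     budget_feasible I vbar \<rho> T \<beta> \<and> revenue I \<beta> T \<in> borel_measurable (sample_space F G T)"

definition thr_value :: "info \<Rightarrow> real \<Rightarrow> real \<Rightarrow> real measure \<Rightarrow> real measure \<Rightarrow> nat \<Rightarrow> real" where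
  "thr_value I vbar \<rho> F G T =
     Sup ((\<lambda>\<beta>. integral\<^sup>L (sample_space F G T) (revenue I \<beta> T)) ` {\<beta>. admissible I vbar \<rho> F G T \<beta>})"

definition OPT :: "real measure \<Rightarrow> real measure \<Rightarrow> real \<Rightarrow> nat \<Rightarrow> real" where
  "OPT F G \<rho> T = real T * Sup {integral\<^sup>L (F \<Otimes>\<^sub>M G) (\<lambda>(v, p). \<pi> v * max 0 (v - p)) | \<pi>.
        \<pi> \<in> borel_measurable borel \<and> (\<forall>v. 0 \<le> \<pi> v \<and> \<pi> v \<le> 1) \<and>
        integral\<^sup>L (F \<Otimes>\<^sub>M G) (\<lambda>(v, p). \<pi> v * (if p \<le> v then p else 0)) \<le> \<rho>}"

definition valid_dist :: "real \<Rightarrow> real measure \<Rightarrow> bool" where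
  "valid_dist vbar F \<longleftrightarrow> prob_space F \<and> sets F = sets borel \<and> measure F {0..vbar} = 1"

end

theory Submission
  imports Defs
begin

text \<open>
  Upper bound: average over the rounds the probability that a strategy plays in round \<open>t\<close> given
  \<open>v\<^sub>t = v\<close>. Since the decision in round \<open>t\<close> depends on the past, on \<open>v\<^sub>t\<close> and on \<open>\<gamma>\<^sub>t\<close> but
  not on \<open>p\<^sub>t\<close>, expected revenue and expected payment are \<open>T\<close> times the objective and the
  constraint of the static program at this averaged throttling function, and the budget, being
  respected on every path, makes it feasible.

  Lower bound: given a feasible \<open>\<pi>\<close>, play with probability \<open>q \<pi>(v)\<close>, where
  \<open>q = 1 - (vbar s + vbar) / (\<rho> T)\<close> and \<open>s = sqrt (T ln T)\<close>, as long as the remaining budget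
  covers \<open>vbar\<close>. The payments of the unconstrained policy are independent, lie in \<open>[0, vbar]\<close>
  and have total mean at most \<open>\<rho> T - vbar - vbar s\<close>, so by Hoeffding's inequality the budget
  check binds with probability at most \<open>1 / T\<^sup>2\<close>. Off that event the strategy earns what the
  unconstrained policy earns, \<open>q T\<close> times the objective at \<open>\<pi>\<close> in expectation; both losses are
  \<open>O(s)\<close>.
\<close>

section \<open>Causality of throttling decisions\<close>

lemma length_decisions [simp]: "length (decisions I \<beta> x t) = t"
  by (induction t) (simp_all add: Let_def)

lemma nth_decisions: "\<tau> < t \<Longrightarrow> decisions I \<beta> x t ! \<tau> = decision I \<beta> x \<tau>"
proof (induction t)
  case 0
  then show ?case by simp
next
  case (Suc t)
  show ?case
  proof (cases "\<tau> < t")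
    case True
    then show ?thesis using Suc by (simp add: Let_def nth_append)
  next
    case False
    then have "\<tau> = t" using Suc.prems by simp
    then show ?thesis by (simp add: decision_def)
  qed
qed

lemma decision_unfold:
  "decision I \<beta> x t = \<beta> t (history I x (decisions I \<beta> x t)) (fst (x t)) (snd (snd (x t)))"
  by (simp add: decision_def Let_def nth_append)

lemma history_cong:
  "(\<And>\<tau>. \<tau> < length ds \<Longrightarrow> x \<tau> = x' \<tau>) \<Longrightarrow> history I x ds = history I x' ds"
  unfolding history_def by auto

lemma decisions_cong:
  "(\<And>\<tau>. \<tau> < t \<Longrightarrow> x \<tau> = x' \<tau>) \<Longrightarrow> decisions I \<beta> x t = decisions I \<beta> x' t"
proof (induction t)
  case 0
  then show ?case by simp
next
  case (Suc t)
  then have "decisions I \<beta> x t = decisions I \<beta> x' t" by simp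
  moreover have "history I x (decisions I \<beta> x t) = history I x' (decisions I \<beta> x t)"
    by (rule history_cong) (use Suc.prems in simp)
  ultimately show ?case using Suc.prems[of t] by (simp add: Let_def)
qed

lemma decision_cong:
  assumes "\<And>\<tau>. \<tau> < t \<Longrightarrow> x \<tau> = x' \<tau>"
    and "fst (x t) = fst (x' t)" and "snd (snd (x t)) = snd (snd (x' t))"
  shows "decision I \<beta> x t = decision I \<beta> x' t"
proof -
  have "decisions I \<beta> x t = decisions I \<beta> x' t" by (rule decisions_cong) (use assms in simp)
  moreover have "history I x (decisions I \<beta> x t) = history I x' (decisions I \<beta> x t)"
    by (rule history_cong) (use assms in simp)
  ultimately show ?thesis using assms by (simp add: decision_unfold)
qed

lemma revenue_Suc:
  "revenue I \<beta> (Suc k) x =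
     revenue I \<beta> k x + (if decision I \<beta> x k then max 0 (fst (x k) - fst (snd (x k))) else 0)"
  by (simp add: revenue_def)

lemma revenue_cong:
  assumes "\<And>\<tau>. \<tau> < k \<Longrightarrow> x \<tau> = x' \<tau>"
  shows "revenue I \<beta> k x = revenue I \<beta> k x'"
proof -
  have "decision I \<beta> x \<tau> = decision I \<beta> x' \<tau>" if "\<tau> < k" for \<tau>
    by (rule decision_cong) (use assms that in auto)
  then show ?thesis unfolding revenue_def using assms by (intro sum.cong) auto
qed

text \<open>Admissibility only asks for measurable revenue. Decisions are recovered from it: raising the
  price of round \<open>k\<close> to \<open>v\<^sub>k\<close> erases the revenue of that round, and lowering it to \<open>v\<^sub>k - 1\<close> makes
  the revenue of that round the indicator of the decision.\<close>

lemma revenue_price_eq_value: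
  "revenue I \<beta> k x = revenue I \<beta> (Suc k) (x(k := (fst (x k), fst (x k), snd (snd (x k)))))"
proof -
  have "revenue I \<beta> k (x(k := (fst (x k), fst (x k), snd (snd (x k))))) = revenue I \<beta> k x"
    by (rule revenue_cong) simp
  then show ?thesis by (simp add: revenue_Suc)
qed

lemma decision_iff_revenue_increment:
  fixes x :: outcome and k :: nat
  defines "x' \<equiv> x(k := (fst (x k), fst (x k) - 1, snd (snd (x k))))"
  shows "decision I \<beta> x k \<longleftrightarrow> revenue I \<beta> (Suc k) x' - revenue I \<beta> k x' = 1"
proof -
  have "decision I \<beta> x' k = decision I \<beta> x k"
    unfolding x'_def by (rule decision_cong) auto
  then show ?thesis by (simp add: revenue_Suc x'_def)
qed

lemma measurable_update_component:
  assumes "k \<in> I" and "g \<in> measurable (N k) (N k)"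
  shows "(\<lambda>x. x(k := g (x k))) \<in> measurable (PiM I N) (PiM I N)"
  using assms by (intro measurable_fun_upd[where J = I]) auto

lemma measurable_decision_of_revenue:
  assumes rev: "revenue I \<beta> T \<in> borel_measurable (PiM {..<T} N)"
    and sets_N: "\<And>k. sets (N k) = sets (borel \<Otimes>\<^sub>M (borel \<Otimes>\<^sub>M borel))"
    and "k < T"
  shows "Measurable.pred (PiM {..<T} N) (\<lambda>x. decision I \<beta> x k)"
proof -
  have update: "(\<lambda>x. x(k := (fst (x k), fst (x k) - c, snd (snd (x k)))))
      \<in> measurable (PiM {..<T} N) (PiM {..<T} N)" if "k < T" for k c
  proof (rule measurable_update_component)
    show "(\<lambda>y. (fst y, fst y - c, snd (snd y))) \<in> measurable (N k) (N k)"
      unfolding measurable_cong_sets[OF sets_N sets_N] by measurable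
  qed (use that in simp)
  have rev_k: "revenue I \<beta> j \<in> borel_measurable (PiM {..<T} N)" if "j \<le> T" for j
    using that
  proof (induction j rule: inc_induct)
    case base
    then show ?case by (rule rev)
  next
    case (step j)
    have "revenue I \<beta> j = revenue I \<beta> (Suc j) \<circ> (\<lambda>x. x(j := (fst (x j), fst (x j) - 0, snd (snd (x j)))))"
      by (rule ext) (simp add: revenue_price_eq_value[of I \<beta> j])
    also have "\<dots> \<in> borel_measurable (PiM {..<T} N)"
      using step by (intro measurable_comp[OF update]) auto
    finally show ?case .
  qed
  let ?incr = "\<lambda>x. revenue I \<beta> (Suc k) x - revenue I \<beta> k x"
  let ?lower = "\<lambda>x. x(k := (fst (x k), fst (x k) - 1, snd (snd (x k))))"
  have "(\<lambda>x. decision I \<beta> x k) = (\<lambda>x. (?incr \<circ> ?lower) x = 1)"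
    by (rule ext) (simp add: decision_iff_revenue_increment[of I \<beta> _ k])
  moreover have [measurable]: "?incr \<circ> ?lower \<in> borel_measurable (PiM {..<T} N)"
    using \<open>k < T\<close> by (intro measurable_comp[OF update] borel_measurable_diff rev_k) auto
  ultimately show ?thesis by (simp only:) measurable
qed

section \<open>Revenue, payment and the benchmark program\<close>

definition round_in_range :: "real \<Rightarrow> real \<times> real \<times> real \<Rightarrow> bool" where
  "round_in_range vbar y \<longleftrightarrow> fst y \<in> {0..vbar} \<and> fst (snd y) \<in> {0..vbar} \<and> snd (snd y) \<in> {0..1}"

lemma revenue_bounds:
  assumes "\<forall>t<T. round_in_range vbar (x t)"
  shows "0 \<le> revenue I \<beta> T x \<and> revenue I \<beta> T x \<le> real T * vbar"
proof -
  have "(if decision I \<beta> x t then max 0 (fst (x t) - fst (snd (x t))) else 0) \<le> vbar" if "t < T" for t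
    using assms that by (auto simp: round_in_range_def)
  then show ?thesis
    using sum_bounded_above[of "{..<T}" _ vbar] by (auto simp: revenue_def intro!: sum_nonneg)
qed

lemma budget_feasible_iff:
  "budget_feasible I vbar \<rho> T \<beta> \<longleftrightarrow>
     (\<forall>x. (\<forall>t<T. round_in_range vbar (x t)) \<longrightarrow> payment I \<beta> T x \<le> \<rho> * real T)"
  by (simp add: budget_feasible_def round_in_range_def)

definition clipped_charge :: "real \<Rightarrow> real \<Rightarrow> real \<Rightarrow> real" where
  "clipped_charge vbar v p = (if 0 \<le> p \<and> p \<le> v \<and> p \<le> vbar then p else 0)"

lemma clipped_charge_bounds: "0 \<le> vbar \<Longrightarrow> 0 \<le> clipped_charge vbar v p \<and> clipped_charge vbar v p \<le> vbar"
  by (simp add: clipped_charge_def)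

lemma measurable_clipped_charge [measurable]:
  "(\<lambda>z. clipped_charge vbar (fst z) (snd z)) \<in> borel_measurable (borel \<Otimes>\<^sub>M borel)"
  unfolding clipped_charge_def by measurable

lemma payment_eq_sum_clipped_charge:
  "(\<forall>t<T. round_in_range vbar (x t)) \<Longrightarrow> payment I \<beta> T x =
     (\<Sum>t<T. if decision I \<beta> x t then clipped_charge vbar (fst (x t)) (fst (snd (x t))) else 0)"
  unfolding payment_def by (intro sum.cong) (auto simp: round_in_range_def clipped_charge_def)

definition lp_revenue :: "real measure \<Rightarrow> real measure \<Rightarrow> (real \<Rightarrow> real) \<Rightarrow> real" where
  "lp_revenue F G \<pi> = integral\<^sup>L (F \<Otimes>\<^sub>M G) (\<lambda>(v, p). \<pi> v * max 0 (v - p))"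

definition lp_payment :: "real measure \<Rightarrow> real measure \<Rightarrow> (real \<Rightarrow> real) \<Rightarrow> real" where
  "lp_payment F G \<pi> = integral\<^sup>L (F \<Otimes>\<^sub>M G) (\<lambda>(v, p). \<pi> v * (if p \<le> v then p else 0))"

definition lp_feasible :: "real measure \<Rightarrow> real measure \<Rightarrow> real \<Rightarrow> (real \<Rightarrow> real) \<Rightarrow> bool" where
  "lp_feasible F G \<rho> \<pi> \<longleftrightarrow>
     \<pi> \<in> borel_measurable borel \<and> (\<forall>v. 0 \<le> \<pi> v \<and> \<pi> v \<le> 1) \<and> lp_payment F G \<pi> \<le> \<rho>"

lemma OPT_eq_SUP: "OPT F G \<rho> T = real T * (SUP \<pi>\<in>Collect (lp_feasible F G \<rho>). lp_revenue F G \<pi>)"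
  unfolding OPT_def lp_feasible_def lp_revenue_def lp_payment_def
  by (rule arg_cong[where f = "\<lambda>S. real T * Sup S"]) auto

lemma lp_revenue_scale: "lp_revenue F G (\<lambda>v. q * \<pi> v) = q * lp_revenue F G \<pi>"
  by (simp add: lp_revenue_def case_prod_beta' mult.assoc)

lemma lp_payment_scale: "lp_payment F G (\<lambda>v. q * \<pi> v) = q * lp_payment F G \<pi>"
  by (simp add: lp_payment_def case_prod_beta' mult.assoc)

lemma lp_feasible_zero: "0 \<le> \<rho> \<Longrightarrow> lp_feasible F G \<rho> (\<lambda>_. 0)"
  by (simp add: lp_feasible_def lp_payment_def case_prod_beta')

section \<open>The budgeted throttle\<close>

text \<open>Only rounds that were played are charged, and for those both feedback models reveal the
  price; clipping keeps every charge in \<open>[0, vbar]\<close> whatever the observation.\<close>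

definition spent :: "real \<Rightarrow> (real \<times> bool \<times> real) list \<Rightarrow> real" where
  "spent vbar h = sum_list (map (\<lambda>(v, x, ob). if x then clipped_charge vbar v ob else 0) h)"

definition budgeted_throttle :: "real \<Rightarrow> real \<Rightarrow> nat \<Rightarrow> (real \<Rightarrow> real) \<Rightarrow> strategy" where
  "budgeted_throttle vbar \<rho> T \<pi> t h v \<gamma> \<longleftrightarrow> spent vbar h + vbar \<le> \<rho> * real T \<and> \<gamma> < \<pi> v"

lemma spent_history:
  "spent vbar (history I x (decisions I \<beta> x t)) =
     (\<Sum>\<tau><t. if decision I \<beta> x \<tau> then clipped_charge vbar (fst (x \<tau>)) (fst (snd (x \<tau>))) else 0)"
proof -
  have "spent vbar (history I x (decisions I \<beta> x t)) =
      sum_list (map (\<lambda>\<tau>. if decision I \<beta> x \<tau>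
        then clipped_charge vbar (fst (x \<tau>)) (fst (snd (x \<tau>))) else 0) [0..<t])"
    unfolding spent_def history_def
    by (simp add: comp_def)
      (intro arg_cong[where f = sum_list] map_cong refl,
        auto simp: nth_decisions observe_def split: info.splits)
  then show ?thesis by (simp add: sum_list_map_eq_sum_count2 atLeast0LessThan[symmetric]
        sum_set_upt_conv_sum_list_nat[symmetric])
qed

lemma decision_budgeted_throttle:
  "decision I (budgeted_throttle vbar \<rho> T \<pi>) x t \<longleftrightarrow>
     (\<Sum>\<tau><t. if decision I (budgeted_throttle vbar \<rho> T \<pi>) x \<tau>
       then clipped_charge vbar (fst (x \<tau>)) (fst (snd (x \<tau>))) else 0) + vbar \<le> \<rho> * real T
     \<and> snd (snd (x t)) < \<pi> (fst (x t))"
  by (subst decision_unfold) (simp add: budgeted_throttle_def spent_history)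

lemma budget_feasible_budgeted_throttle:
  assumes "0 \<le> vbar" and "0 \<le> \<rho>"
  shows "budget_feasible I vbar \<rho> T (budgeted_throttle vbar \<rho> T \<pi>)"
  unfolding budget_feasible_iff
proof (intro allI impI)
  fix x :: outcome
  assume "\<forall>t<T. round_in_range vbar (x t)"
  let ?c = "\<lambda>\<tau>. if decision I (budgeted_throttle vbar \<rho> T \<pi>) x \<tau>
    then clipped_charge vbar (fst (x \<tau>)) (fst (snd (x \<tau>))) else 0"
  have "(\<Sum>\<tau><n. ?c \<tau>) \<le> \<rho> * real T" for n
  proof (induction n)
    case 0
    then show ?case using assms by simp
  next
    case (Suc n)
    have "?c n \<le> vbar" using clipped_charge_bounds[OF \<open>0 \<le> vbar\<close>] assms by simp
    then show ?case
      using Suc decision_budgeted_throttle[of I vbar \<rho> T \<pi> x n]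
      by (cases "decision I (budgeted_throttle vbar \<rho> T \<pi>) x n") auto
  qed
  then show "payment I (budgeted_throttle vbar \<rho> T \<pi>) T x \<le> \<rho> * real T"
    using \<open>\<forall>t<T. round_in_range vbar (x t)\<close> by (simp add: payment_eq_sum_clipped_charge)
qed

definition unconstrained_charge :: "real \<Rightarrow> (real \<Rightarrow> real) \<Rightarrow> real \<times> real \<times> real \<Rightarrow> real" where
  "unconstrained_charge vbar \<pi> y =
     (if snd (snd y) < \<pi> (fst y) then clipped_charge vbar (fst y) (fst (snd y)) else 0)"

lemma unconstrained_charge_bounds:
  "0 \<le> vbar \<Longrightarrow> 0 \<le> unconstrained_charge vbar \<pi> y \<and> unconstrained_charge vbar \<pi> y \<le> vbar"
  by (simp add: unconstrained_charge_def clipped_charge_bounds)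

lemma measurable_unconstrained_charge:
  assumes [measurable]: "\<pi> \<in> borel_measurable borel"
  shows "unconstrained_charge vbar \<pi> \<in> borel_measurable (borel \<Otimes>\<^sub>M (borel \<Otimes>\<^sub>M borel))"
  unfolding unconstrained_charge_def[abs_def] clipped_charge_def by measurable

lemma decision_budgeted_throttle_unconstrained:
  assumes "0 \<le> vbar" and reserve: "(\<Sum>\<tau><T. unconstrained_charge vbar \<pi> (x \<tau>)) + vbar \<le> \<rho> * real T"
  shows "t < T \<Longrightarrow> decision I (budgeted_throttle vbar \<rho> T \<pi>) x t \<longleftrightarrow> snd (snd (x t)) < \<pi> (fst (x t))"
proof (induction t rule: less_induct)
  case (less t)
  have "(\<Sum>\<tau><t. if decision I (budgeted_throttle vbar \<rho> T \<pi>) x \<tau>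
      then clipped_charge vbar (fst (x \<tau>)) (fst (snd (x \<tau>))) else 0)
      = (\<Sum>\<tau><t. unconstrained_charge vbar \<pi> (x \<tau>))"
    using less by (intro sum.cong) (auto simp: unconstrained_charge_def)
  also have "\<dots> \<le> (\<Sum>\<tau><T. unconstrained_charge vbar \<pi> (x \<tau>))"
    using less.prems by (intro sum_mono2) (auto simp: unconstrained_charge_bounds[OF \<open>0 \<le> vbar\<close>])
  finally show ?case using reserve by (subst decision_budgeted_throttle) auto
qed

definition unconstrained_revenue :: "(real \<Rightarrow> real) \<Rightarrow> real \<times> real \<times> real \<Rightarrow> real" where
  "unconstrained_revenue \<pi> y = (if snd (snd y) < \<pi> (fst y) then max 0 (fst y - fst (snd y)) else 0)"

lemma unconstrained_revenue_bounds:
  "round_in_range vbar y \<Longrightarrow> 0 \<le> unconstrained_revenue \<pi> y \<and> unconstrained_revenue \<pi> y \<le> vbar"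
  by (auto simp: unconstrained_revenue_def round_in_range_def)

lemma measurable_unconstrained_revenue:
  assumes [measurable]: "\<pi> \<in> borel_measurable borel"
  shows "unconstrained_revenue \<pi> \<in> borel_measurable (borel \<Otimes>\<^sub>M (borel \<Otimes>\<^sub>M borel))"
  unfolding unconstrained_revenue_def[abs_def] by measurable

lemma revenue_budgeted_throttle_ge:
  assumes "0 \<le> vbar" and range: "\<forall>t<T. round_in_range vbar (x t)"
  shows "(\<Sum>t<T. unconstrained_revenue \<pi> (x t))
      - (if \<rho> * real T < (\<Sum>t<T. unconstrained_charge vbar \<pi> (x t)) + vbar then real T * vbar else 0)
    \<le> revenue I (budgeted_throttle vbar \<rho> T \<pi>) T x"
proof (cases "\<rho> * real T < (\<Sum>t<T. unconstrained_charge vbar \<pi> (x t)) + vbar")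
  case True
  have "unconstrained_revenue \<pi> (x t) \<le> vbar" if "t < T" for t
    using range that unconstrained_revenue_bounds[of vbar "x t" \<pi>] by simp
  then have "(\<Sum>t<T. unconstrained_revenue \<pi> (x t)) \<le> real T * vbar"
    using sum_bounded_above[of "{..<T}" "\<lambda>t. unconstrained_revenue \<pi> (x t)" vbar] by simp
  then show ?thesis
    using True revenue_bounds[OF range, of I "budgeted_throttle vbar \<rho> T \<pi>"] by simp
next
  case False
  then have "decision I (budgeted_throttle vbar \<rho> T \<pi>) x t \<longleftrightarrow> snd (snd (x t)) < \<pi> (fst (x t))"
    if "t < T" for t
    using assms(1) that by (intro decision_budgeted_throttle_unconstrained) auto
  then have "revenue I (budgeted_throttle vbar \<rho> T \<pi>) T x = (\<Sum>t<T. unconstrained_revenue \<pi> (x t))"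
    unfolding revenue_def unconstrained_revenue_def by (intro sum.cong) auto
  then show ?thesis using False by simp
qed

section \<open>The probability model\<close>

lemma borel_measurable_curried_compose:
  assumes "(\<lambda>z. h (fst z) (snd z)) \<in> borel_measurable (borel \<Otimes>\<^sub>M borel)"
    and "a \<in> borel_measurable M" and "b \<in> borel_measurable M"
  shows "(\<lambda>x. h (a x) (b x)) \<in> borel_measurable M"
  using measurable_comp[OF measurable_Pair[OF assms(2,3)] assms(1)] by (simp add: comp_def)

definition unif01 :: "real measure" where
  "unif01 = uniform_measure lborel {0..1}"

definition round_distr :: "real measure \<Rightarrow> real measure \<Rightarrow> (real \<times> real \<times> real) measure" where
  "round_distr F G = F \<Otimes>\<^sub>M (G \<Otimes>\<^sub>M unif01)"

lemma sample_space_eq_PiM: "sample_space F G T = PiM {..<T} (\<lambda>_. round_distr F G)"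
  by (simp add: sample_space_def round_distr_def unif01_def)

lemma prob_space_unif01: "prob_space unif01"
  unfolding unif01_def by (rule prob_space_uniform_measure) auto

lemma sets_unif01 [measurable_cong]: "sets unif01 = sets borel"
  by (simp add: unif01_def)

lemma AE_unif01: "AE \<gamma> in unif01. \<gamma> \<in> {0..1}"
proof -
  interpret prob_space unif01 by (rule prob_space_unif01)
  show ?thesis
    by (subst AE_in_set_eq_1) (simp_all add: unif01_def measure_def emeasure_uniform_measure)
qed

lemma nn_integral_unif01_less:
  assumes "0 \<le> a" "a \<le> 1"
  shows "(\<integral>\<^sup>+\<gamma>. (if \<gamma> < a then 1 else 0) \<partial>unif01) = ennreal a"
proof -
  have "(\<integral>\<^sup>+\<gamma>. (if \<gamma> < a then 1 else 0) \<partial>unif01) = (\<integral>\<^sup>+\<gamma>. indicator {..<a} \<gamma> \<partial>unif01)"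
    by (intro nn_integral_cong) (auto simp: indicator_def)
  also have "\<dots> = emeasure unif01 {..<a}"
    by (rule nn_integral_indicator) (simp add: sets_unif01)
  also have "\<dots> = emeasure lborel ({0..1} \<inter> {..<a}) / emeasure lborel {0..1::real}"
    unfolding unif01_def by (rule emeasure_uniform_measure) auto
  also have "{0..1} \<inter> {..<a} = {0..<a}" using assms by auto
  finally show ?thesis using assms by (simp add: divide_ennreal_def)
qed

locale value_price_distrs =
  fixes F G :: "real measure"
  assumes prob_space_F: "prob_space F" and prob_space_G: "prob_space G"
    and sets_F [measurable_cong]: "sets F = sets borel"
    and sets_G [measurable_cong]: "sets G = sets borel"
begin

abbreviation rounds :: "nat \<Rightarrow> outcome measure" where
  "rounds T \<equiv> PiM {..<T} (\<lambda>_. round_distr F G)"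

lemma prob_space_pair_F_G: "prob_space (F \<Otimes>\<^sub>M G)"
  by (intro prob_space_pair prob_space_F prob_space_G)

lemma prob_space_round_distr: "prob_space (round_distr F G)"
  unfolding round_distr_def by (intro prob_space_pair prob_space_F prob_space_G prob_space_unif01)

lemma sets_round_distr [measurable_cong]:
  "sets (round_distr F G) = sets (borel \<Otimes>\<^sub>M (borel \<Otimes>\<^sub>M borel))"
  unfolding round_distr_def by (intro sets_pair_measure_cong sets_F sets_G sets_unif01)

lemma space_round_distr [simp]: "space (round_distr F G) = UNIV"
  using sets_eq_imp_space_eq[OF sets_round_distr] by (simp add: space_pair_measure)

lemma prob_space_PiM_round_distr: "prob_space (PiM J (\<lambda>_. round_distr F G))"
  by (intro prob_space_PiM prob_space_round_distr)

lemma product_sigma_finite_round_distr: "product_sigma_finite (\<lambda>_. round_distr F G)"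
  unfolding product_sigma_finite_def
  using prob_space_round_distr prob_space_imp_sigma_finite by blast

lemma measurable_round:
  "t < T \<Longrightarrow> (\<lambda>x. x t) \<in> measurable (rounds T) (borel \<Otimes>\<^sub>M (borel \<Otimes>\<^sub>M borel))"
  using measurable_component_singleton[of t "{..<T}" "\<lambda>_. round_distr F G"]
  by (simp add: measurable_cong_sets[OF refl sets_round_distr])

lemma measurable_decision_admissible:
  assumes "admissible I vbar \<rho> F G T \<beta>" and "t < T"
  shows "Measurable.pred (rounds T) (\<lambda>x. decision I \<beta> x t)"
  using assms by (intro measurable_decision_of_revenue sets_round_distr)
    (simp_all add: admissible_def sample_space_eq_PiM)

lemma nn_integral_round_distr:
  fixes g h :: "real \<Rightarrow> real \<Rightarrow> ennreal"
  assumes g: "(\<lambda>z. g (fst z) (snd z)) \<in> borel_measurable (borel \<Otimes>\<^sub>M borel)"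
    and h: "(\<lambda>z. h (fst z) (snd z)) \<in> borel_measurable (borel \<Otimes>\<^sub>M borel)"
  shows "(\<integral>\<^sup>+y. g (fst y) (fst (snd y)) * h (fst y) (snd (snd y)) \<partial>round_distr F G)
       = (\<integral>\<^sup>+z. g (fst z) (snd z) * (\<integral>\<^sup>+\<gamma>. h (fst z) \<gamma> \<partial>unif01) \<partial>(F \<Otimes>\<^sub>M G))"
proof -
  interpret U: prob_space unif01 by (rule prob_space_unif01)
  interpret G: prob_space G by (rule prob_space_G)
  interpret GU: prob_space "G \<Otimes>\<^sub>M unif01" by (intro prob_space_pair prob_space_G prob_space_unif01)
  note [measurable (raw)] = borel_measurable_curried_compose[OF g] borel_measurable_curried_compose[OF h]
  have [measurable]: "(\<lambda>v. \<integral>\<^sup>+\<gamma>. h v \<gamma> \<partial>unif01) \<in> borel_measurable borel"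
  proof -
    have "(\<lambda>z. h (fst z) (snd z)) \<in> borel_measurable (borel \<Otimes>\<^sub>M unif01)"
      using h by (simp add: measurable_cong_sets[OF sets_pair_measure_cong[OF refl sets_unif01] refl])
    from U.borel_measurable_nn_integral_fst[OF this] show ?thesis by simp
  qed
  have "(\<integral>\<^sup>+y. g (fst y) (fst (snd y)) * h (fst y) (snd (snd y)) \<partial>round_distr F G)
      = (\<integral>\<^sup>+v. (\<integral>\<^sup>+w. g v (fst w) * h v (snd w) \<partial>(G \<Otimes>\<^sub>M unif01)) \<partial>F)"
    unfolding round_distr_def
    by (rule GU.nn_integral_fst[symmetric,
          where f = "\<lambda>y. g (fst y) (fst (snd y)) * h (fst y) (snd (snd y))", simplified])
      measurable
  also have "\<dots> = (\<integral>\<^sup>+v. (\<integral>\<^sup>+p. g v p * (\<integral>\<^sup>+\<gamma>. h v \<gamma> \<partial>unif01) \<partial>G) \<partial>F)"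
  proof (rule nn_integral_cong)
    fix v :: real
    have "(\<integral>\<^sup>+w. g v (fst w) * h v (snd w) \<partial>(G \<Otimes>\<^sub>M unif01)) = (\<integral>\<^sup>+p. (\<integral>\<^sup>+\<gamma>. g v p * h v \<gamma> \<partial>unif01) \<partial>G)"
      by (rule U.nn_integral_fst[symmetric, where f = "\<lambda>w. g v (fst w) * h v (snd w)", simplified]) measurable
    also have "\<dots> = (\<integral>\<^sup>+p. g v p * (\<integral>\<^sup>+\<gamma>. h v \<gamma> \<partial>unif01) \<partial>G)"
      by (intro nn_integral_cong nn_integral_cmult) measurable
    finally show "(\<integral>\<^sup>+w. g v (fst w) * h v (snd w) \<partial>(G \<Otimes>\<^sub>M unif01)) = \<dots>" .
  qed
  also have "\<dots> = (\<integral>\<^sup>+z. g (fst z) (snd z) * (\<integral>\<^sup>+\<gamma>. h (fst z) \<gamma> \<partial>unif01) \<partial>(F \<Otimes>\<^sub>M G))"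
    by (subst G.nn_integral_fst[symmetric]) auto
  finally show ?thesis .
qed

lemma integral_rounds_component:
  fixes f :: "real \<times> real \<times> real \<Rightarrow> real"
  assumes "t < T" and f: "f \<in> borel_measurable (round_distr F G)"
  shows "integral\<^sup>L (rounds T) (\<lambda>x. f (x t)) = integral\<^sup>L (round_distr F G) f"
proof -
  have "distr (rounds T) (round_distr F G) (\<lambda>x. x t) = round_distr F G"
    by (rule distr_PiM_component) (use prob_space_round_distr \<open>t < T\<close> in auto)
  then have "integral\<^sup>L (round_distr F G) f = integral\<^sup>L (distr (rounds T) (round_distr F G) (\<lambda>x. x t)) f"
    by simp
  also have "\<dots> = integral\<^sup>L (rounds T) (\<lambda>x. f (x t))"
    by (rule integral_distr[OF _ f]) (use \<open>t < T\<close> in simp)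
  finally show ?thesis by simp
qed

lemma integral_round_distr_threshold:
  assumes [measurable]: "a \<in> borel_measurable borel" and a_bounds: "\<And>v. 0 \<le> a v \<and> a v \<le> 1"
    and g: "(\<lambda>z. g (fst z) (snd z)) \<in> borel_measurable (borel \<Otimes>\<^sub>M borel)" and g_nonneg: "\<And>v p. 0 \<le> g v p"
  shows "integral\<^sup>L (round_distr F G) (\<lambda>y. if snd (snd y) < a (fst y) then g (fst y) (fst (snd y)) else 0)
       = integral\<^sup>L (F \<Otimes>\<^sub>M G) (\<lambda>z. a (fst z) * g (fst z) (snd z))"
proof -
  note [measurable (raw)] = borel_measurable_curried_compose[OF g]
  have g': "(\<lambda>z. ennreal (g (fst z) (snd z))) \<in> borel_measurable (borel \<Otimes>\<^sub>M borel)"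
    using g by measurable
  have threshold: "(\<lambda>z. if snd z < a (fst z) then 1 else 0 :: ennreal) \<in> borel_measurable (borel \<Otimes>\<^sub>M borel)"
    by measurable
  have "(\<integral>\<^sup>+y. ennreal (if snd (snd y) < a (fst y) then g (fst y) (fst (snd y)) else 0) \<partial>round_distr F G)
      = (\<integral>\<^sup>+y. ennreal (g (fst y) (fst (snd y))) * (if snd (snd y) < a (fst y) then 1 else 0) \<partial>round_distr F G)"
    by (intro nn_integral_cong) simp
  also have "\<dots> = (\<integral>\<^sup>+z. ennreal (g (fst z) (snd z)) * ennreal (a (fst z)) \<partial>(F \<Otimes>\<^sub>M G))"
    by (simp add: nn_integral_round_distr[OF g' threshold] nn_integral_unif01_less a_bounds)
  also have "\<dots> = (\<integral>\<^sup>+z. ennreal (a (fst z) * g (fst z) (snd z)) \<partial>(F \<Otimes>\<^sub>M G))"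
    by (intro nn_integral_cong) (simp add: a_bounds g_nonneg ennreal_mult' mult.commute)
  finally show ?thesis
    by (simp add: integral_eq_nn_integral a_bounds g_nonneg)
qed

lemma indep_vars_rounds:
  assumes "0 < T"
  shows "prob_space.indep_vars (rounds T) (\<lambda>_. round_distr F G) (\<lambda>t x. x t) {..<T}"
proof -
  interpret prob_space "rounds T" by (rule prob_space_PiM_round_distr)
  show ?thesis
  proof (subst indep_vars_iff_distr_eq_PiM')
    have "distr (rounds T) (rounds T) (\<lambda>x. \<lambda>i\<in>{..<T}. x i) = distr (rounds T) (rounds T) (\<lambda>x. x)"
      by (rule distr_cong) (auto simp: space_PiM PiE_iff extensional_restrict)
    also have "\<dots> = PiM {..<T} (\<lambda>i. distr (rounds T) (round_distr F G) (\<lambda>x. x i))"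
      by (simp add: distr_id, rule PiM_cong)
        (auto intro!: distr_PiM_component[symmetric] prob_space_round_distr)
    finally show "distr (rounds T) (rounds T) (\<lambda>x. \<lambda>i\<in>{..<T}. x i)
        = PiM {..<T} (\<lambda>i. distr (rounds T) (round_distr F G) (\<lambda>x. x i))" .
  qed (use \<open>0 < T\<close> in auto)
qed

lemma measurable_round_curried:
  assumes "t < T" and "(\<lambda>z. g (fst z) (snd z)) \<in> borel_measurable (borel \<Otimes>\<^sub>M borel)"
  shows "(\<lambda>x. g (fst (x t)) (fst (snd (x t)))) \<in> borel_measurable (rounds T)"
proof -
  note [measurable] = measurable_round[OF assms(1)]
  show ?thesis by (rule borel_measurable_curried_compose[OF assms(2)]) measurable
qed

lemma measurable_decision_update:
  assumes "t < T" and D: "Measurable.pred (rounds T) (\<lambda>x. decision I \<beta> x t)"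
  shows "Measurable.pred (round_distr F G \<Otimes>\<^sub>M PiM ({..<T} - {t}) (\<lambda>_. round_distr F G))
           (\<lambda>z. decision I \<beta> ((snd z)(t := fst z)) t)"
proof -
  have "(\<lambda>z. (snd z)(t := fst z))
      \<in> measurable (round_distr F G \<Otimes>\<^sub>M PiM ({..<T} - {t}) (\<lambda>_. round_distr F G)) (rounds T)"
    using \<open>t < T\<close> by (intro measurable_fun_upd[where J = "{..<T} - {t}"]) auto
  from measurable_comp[OF this D] show ?thesis
    by (simp add: comp_def)
qed

text \<open>The price \<open>0\<close> put into round \<open>t\<close> is a placeholder: the decision in round \<open>t\<close> ignores \<open>p\<^sub>t\<close>.\<close>

definition accept_prob_given :: "info \<Rightarrow> strategy \<Rightarrow> nat \<Rightarrow> nat \<Rightarrow> real \<Rightarrow> real \<Rightarrow> ennreal" where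
  "accept_prob_given I \<beta> T t v \<gamma> =
     (\<integral>\<^sup>+x. (if decision I \<beta> (x(t := (v, 0, \<gamma>))) t then 1 else 0) \<partial>PiM ({..<T} - {t}) (\<lambda>_. round_distr F G))"

definition accept_prob :: "info \<Rightarrow> strategy \<Rightarrow> nat \<Rightarrow> nat \<Rightarrow> real \<Rightarrow> ennreal" where
  "accept_prob I \<beta> T t v = (\<integral>\<^sup>+\<gamma>. accept_prob_given I \<beta> T t v \<gamma> \<partial>unif01)"

lemma accept_prob_given_le_1: "accept_prob_given I \<beta> T t v \<gamma> \<le> 1"
proof -
  interpret prob_space "PiM ({..<T} - {t}) (\<lambda>_. round_distr F G)"
    by (rule prob_space_PiM_round_distr)
  have "accept_prob_given I \<beta> T t v \<gamma> \<le> (\<integral>\<^sup>+x. 1 \<partial>PiM ({..<T} - {t}) (\<lambda>_. round_distr F G))"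
    unfolding accept_prob_given_def by (intro nn_integral_mono) auto
  then show ?thesis by (simp add: emeasure_space_1)
qed

lemma accept_prob_le_1: "accept_prob I \<beta> T t v \<le> 1"
proof -
  interpret prob_space unif01 by (rule prob_space_unif01)
  have "accept_prob I \<beta> T t v \<le> (\<integral>\<^sup>+\<gamma>. 1 \<partial>unif01)"
    unfolding accept_prob_def by (intro nn_integral_mono accept_prob_given_le_1)
  then show ?thesis using emeasure_space_1 by simp
qed

lemma measurable_accept_prob_given:
  assumes "t < T" and "Measurable.pred (rounds T) (\<lambda>x. decision I \<beta> x t)"
  shows "(\<lambda>z. accept_prob_given I \<beta> T t (fst z) (snd z)) \<in> borel_measurable (borel \<Otimes>\<^sub>M borel)"
proof -
  let ?J = "PiM ({..<T} - {t}) (\<lambda>_. round_distr F G)"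
  interpret J: prob_space ?J by (rule prob_space_PiM_round_distr)
  have "(\<lambda>(z::real \<times> real, x). ((fst z, 0::real, snd z), x))
      \<in> measurable ((borel \<Otimes>\<^sub>M borel) \<Otimes>\<^sub>M ?J) (round_distr F G \<Otimes>\<^sub>M ?J)"
    by measurable
  from measurable_comp[OF this measurable_decision_update[OF assms]]
  have "Measurable.pred ((borel \<Otimes>\<^sub>M borel) \<Otimes>\<^sub>M ?J) (\<lambda>(z, x). decision I \<beta> (x(t := (fst z, 0, snd z))) t)"
    by (simp add: comp_def case_prod_beta')
  then have "(\<lambda>(z, x). (if decision I \<beta> (x(t := (fst z, 0, snd z))) t then 1 else 0) :: ennreal)
      \<in> borel_measurable ((borel \<Otimes>\<^sub>M borel) \<Otimes>\<^sub>M ?J)"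
    by (simp add: case_prod_beta')
  from J.borel_measurable_nn_integral_fst[OF this] show ?thesis
    by (simp add: accept_prob_given_def case_prod_beta')
qed

lemma measurable_accept_prob:
  assumes "t < T" and "Measurable.pred (rounds T) (\<lambda>x. decision I \<beta> x t)"
  shows "accept_prob I \<beta> T t \<in> borel_measurable borel"
proof -
  interpret U: prob_space unif01 by (rule prob_space_unif01)
  have "(\<lambda>z. accept_prob_given I \<beta> T t (fst z) (snd z)) \<in> borel_measurable (borel \<Otimes>\<^sub>M unif01)"
    using measurable_accept_prob_given[OF assms]
    by (simp add: measurable_cong_sets[OF sets_pair_measure_cong[OF refl sets_unif01] refl])
  from U.borel_measurable_nn_integral_fst[OF this] show ?thesis
    by (simp add: accept_prob_def[abs_def])
qed

lemma nn_integral_decision_fun_upd: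
  assumes "t < T" and "Measurable.pred (rounds T) (\<lambda>x. decision I \<beta> x t)"
  shows "(\<integral>\<^sup>+x. (if decision I \<beta> (x(t := y)) t then c else 0) \<partial>PiM ({..<T} - {t}) (\<lambda>_. round_distr F G))
       = c * accept_prob_given I \<beta> T t (fst y) (snd (snd y))"
proof -
  let ?J = "PiM ({..<T} - {t}) (\<lambda>_. round_distr F G)"
  have "decision I \<beta> (x(t := y)) t = decision I \<beta> (x(t := (fst y, 0, snd (snd y)))) t" for x
    by (rule decision_cong) auto
  then have "(\<integral>\<^sup>+x. (if decision I \<beta> (x(t := y)) t then c else 0) \<partial>?J)
      = (\<integral>\<^sup>+x. c * (if decision I \<beta> (x(t := (fst y, 0, snd (snd y)))) t then 1 else 0) \<partial>?J)"
    by (intro nn_integral_cong) simp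
  also have "\<dots> = c * accept_prob_given I \<beta> T t (fst y) (snd (snd y))"
    unfolding accept_prob_given_def
    using measurable_compose_Pair1[OF _ measurable_decision_update[OF assms], of "(fst y, 0, snd (snd y))"]
    by (intro nn_integral_cmult) simp
  finally show ?thesis .
qed

lemma nn_integral_decision:
  assumes t: "t < T" and D: "Measurable.pred (rounds T) (\<lambda>x. decision I \<beta> x t)"
    and g: "(\<lambda>z. g (fst z) (snd z)) \<in> borel_measurable (borel \<Otimes>\<^sub>M borel)"
  shows "(\<integral>\<^sup>+x. (if decision I \<beta> x t then g (fst (x t)) (fst (snd (x t))) else 0) \<partial>rounds T)
       = (\<integral>\<^sup>+z. g (fst z) (snd z) * accept_prob I \<beta> T t (fst z) \<partial>(F \<Otimes>\<^sub>M G))"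
proof -
  interpret product_sigma_finite "\<lambda>_. round_distr F G" by (rule product_sigma_finite_round_distr)
  let ?J = "{..<T} - {t}"
  define f where "f x = (if decision I \<beta> x t then g (fst (x t)) (fst (snd (x t))) else 0)" for x
  have insert_J: "insert t ?J = {..<T}" using t by auto
  have "f \<in> borel_measurable (rounds T)"
    unfolding f_def using D measurable_round_curried[OF t g] by measurable
  then have f: "f \<in> borel_measurable (PiM (insert t ?J) (\<lambda>_. round_distr F G))"
    by (simp only: insert_J)
  have "(\<integral>\<^sup>+x. f x \<partial>rounds T) = (\<integral>\<^sup>+y. (\<integral>\<^sup>+x. f (x(t := y)) \<partial>PiM ?J (\<lambda>_. round_distr F G)) \<partial>round_distr F G)"
    by (subst insert_J[symmetric], rule product_nn_integral_insert_rev[OF _ _ f]) auto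
  also have "\<dots> = (\<integral>\<^sup>+y. g (fst y) (fst (snd y)) * accept_prob_given I \<beta> T t (fst y) (snd (snd y))
      \<partial>round_distr F G)"
  proof (rule nn_integral_cong)
    fix y :: "real \<times> real \<times> real"
    show "(\<integral>\<^sup>+x. f (x(t := y)) \<partial>PiM ?J (\<lambda>_. round_distr F G))
        = g (fst y) (fst (snd y)) * accept_prob_given I \<beta> T t (fst y) (snd (snd y))"
    proof -
      have "f (x(t := y)) = (if decision I \<beta> (x(t := y)) t then g (fst y) (fst (snd y)) else 0)" for x
        by (simp add: f_def)
      then show ?thesis using nn_integral_decision_fun_upd[OF t D, of y "g (fst y) (fst (snd y))"] by simp
    qed
  qed
  also have "\<dots> = (\<integral>\<^sup>+z. g (fst z) (snd z) * accept_prob I \<beta> T t (fst z) \<partial>(F \<Otimes>\<^sub>M G))"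
    unfolding accept_prob_def
    by (rule nn_integral_round_distr[OF g measurable_accept_prob_given[OF t D]])
  finally show ?thesis unfolding f_def .
qed

definition avg_accept_prob :: "info \<Rightarrow> strategy \<Rightarrow> nat \<Rightarrow> real \<Rightarrow> real" where
  "avg_accept_prob I \<beta> T v = (\<Sum>t<T. enn2real (accept_prob I \<beta> T t v)) / real T"

lemma avg_accept_prob_bounds: "0 \<le> avg_accept_prob I \<beta> T v \<and> avg_accept_prob I \<beta> T v \<le> 1"
proof -
  have "0 \<le> enn2real (accept_prob I \<beta> T t v) \<and> enn2real (accept_prob I \<beta> T t v) \<le> 1" for t
    using enn2real_mono[OF accept_prob_le_1[of I \<beta> T t v]] by simp
  then have "0 \<le> (\<Sum>t<T. enn2real (accept_prob I \<beta> T t v)) \<and> (\<Sum>t<T. enn2real (accept_prob I \<beta> T t v)) \<le> real T"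
    using sum_mono[of "{..<T}" "\<lambda>t. enn2real (accept_prob I \<beta> T t v)" "\<lambda>_. 1"] by (simp add: sum_nonneg)
  then show ?thesis by (cases "T = 0") (simp_all add: avg_accept_prob_def divide_le_eq_1)
qed

lemma sum_accept_prob: "(\<Sum>t<T. accept_prob I \<beta> T t v) = ennreal (real T * avg_accept_prob I \<beta> T v)"
proof -
  have "(\<Sum>t<T. accept_prob I \<beta> T t v) = (\<Sum>t<T. ennreal (enn2real (accept_prob I \<beta> T t v)))"
    by (intro sum.cong refl) (use le_less_trans[OF accept_prob_le_1 ennreal_one_less_top] in simp)
  also have "\<dots> = ennreal (\<Sum>t<T. enn2real (accept_prob I \<beta> T t v))"
    by (rule sum_ennreal) simp
  finally show ?thesis by (cases "T = 0") (simp_all add: avg_accept_prob_def)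
qed

lemma measurable_avg_accept_prob:
  assumes "\<And>t. t < T \<Longrightarrow> Measurable.pred (rounds T) (\<lambda>x. decision I \<beta> x t)"
  shows "avg_accept_prob I \<beta> T \<in> borel_measurable borel"
proof -
  have [measurable]: "accept_prob I \<beta> T t \<in> borel_measurable borel" if "t \<in> {..<T}" for t
    using that by (intro measurable_accept_prob assms) auto
  show ?thesis unfolding avg_accept_prob_def[abs_def] by measurable
qed

lemma nn_integral_sum_decisions:
  assumes D: "\<And>t. t < T \<Longrightarrow> Measurable.pred (rounds T) (\<lambda>x. decision I \<beta> x t)"
    and g: "(\<lambda>z. g (fst z) (snd z)) \<in> borel_measurable (borel \<Otimes>\<^sub>M borel)" and g_nonneg: "\<And>v p. 0 \<le> g v p"
  shows "(\<integral>\<^sup>+x. ennreal (\<Sum>t<T. if decision I \<beta> x t then g (fst (x t)) (fst (snd (x t))) else 0) \<partial>rounds T)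
       = ennreal (real T) * (\<integral>\<^sup>+z. ennreal (avg_accept_prob I \<beta> T (fst z) * g (fst z) (snd z)) \<partial>(F \<Otimes>\<^sub>M G))"
proof -
  have g': "(\<lambda>z. ennreal (g (fst z) (snd z))) \<in> borel_measurable (borel \<Otimes>\<^sub>M borel)"
    using g by measurable
  note [measurable] = measurable_avg_accept_prob[OF D]
  have [measurable]: "(\<lambda>z. g (fst z) (snd z)) \<in> borel_measurable (F \<Otimes>\<^sub>M G)"
    using g by (simp add: measurable_cong_sets[OF sets_pair_measure_cong[OF sets_F sets_G] refl])
  have "(\<integral>\<^sup>+x. ennreal (\<Sum>t<T. if decision I \<beta> x t then g (fst (x t)) (fst (snd (x t))) else 0) \<partial>rounds T)
      = (\<integral>\<^sup>+x. (\<Sum>t<T. if decision I \<beta> x t then ennreal (g (fst (x t)) (fst (snd (x t)))) else 0) \<partial>rounds T)"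
    by (intro nn_integral_cong) (auto simp: g_nonneg intro!: sum.cong simp flip: sum_ennreal)
  also have "\<dots> = (\<Sum>t<T. \<integral>\<^sup>+x. (if decision I \<beta> x t then ennreal (g (fst (x t)) (fst (snd (x t))))
      else 0) \<partial>rounds T)"
  proof (rule nn_integral_sum)
    fix t assume "t \<in> {..<T}"
    then have "t < T" by simp
    note [measurable] = D[OF this] measurable_round_curried[OF this g']
    show "(\<lambda>x. if decision I \<beta> x t then ennreal (g (fst (x t)) (fst (snd (x t)))) else 0)
        \<in> borel_measurable (rounds T)"
      by measurable
  qed
  also have "\<dots> = (\<Sum>t<T. \<integral>\<^sup>+z. ennreal (g (fst z) (snd z)) * accept_prob I \<beta> T t (fst z) \<partial>(F \<Otimes>\<^sub>M G))"
    by (intro sum.cong refl nn_integral_decision[OF _ D g']) auto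
  also have "\<dots> = (\<integral>\<^sup>+z. (\<Sum>t<T. ennreal (g (fst z) (snd z)) * accept_prob I \<beta> T t (fst z)) \<partial>(F \<Otimes>\<^sub>M G))"
  proof (rule nn_integral_sum[symmetric])
    fix t assume "t \<in> {..<T}"
    then have "t < T" by simp
    note [measurable] = measurable_accept_prob[OF this D[OF this]]
    show "(\<lambda>z. ennreal (g (fst z) (snd z)) * accept_prob I \<beta> T t (fst z)) \<in> borel_measurable (F \<Otimes>\<^sub>M G)"
      by measurable
  qed
  also have "\<dots> = (\<integral>\<^sup>+z. ennreal (real T) * ennreal (avg_accept_prob I \<beta> T (fst z) * g (fst z) (snd z))
      \<partial>(F \<Otimes>\<^sub>M G))"
    by (intro nn_integral_cong)
      (simp add: sum_distrib_left[symmetric] sum_accept_prob avg_accept_prob_bounds g_nonneg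
        flip: ennreal_mult ennreal_mult')
  also have "\<dots> = ennreal (real T) *
      (\<integral>\<^sup>+z. ennreal (avg_accept_prob I \<beta> T (fst z) * g (fst z) (snd z)) \<partial>(F \<Otimes>\<^sub>M G))"
    by (rule nn_integral_cmult) measurable
  finally show ?thesis .
qed

lemma measurable_decision_budgeted_throttle:
  assumes [measurable]: "\<pi> \<in> borel_measurable borel"
  shows "t < T \<Longrightarrow> Measurable.pred (rounds T) (\<lambda>x. decision I (budgeted_throttle vbar \<rho> T \<pi>) x t)"
proof (induction t rule: less_induct)
  case (less t)
  have [measurable]: "Measurable.pred (rounds T) (\<lambda>x. decision I (budgeted_throttle vbar \<rho> T \<pi>) x \<tau>)"
    "(\<lambda>x. clipped_charge vbar (fst (x \<tau>)) (fst (snd (x \<tau>)))) \<in> borel_measurable (rounds T)"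
    if "\<tau> \<in> {..<t}" for \<tau>
    using that less by (auto intro!: measurable_round_curried)
  note [measurable] = measurable_round[OF less.prems]
  show ?case by (subst decision_budgeted_throttle) measurable
qed

lemma admissible_budgeted_throttle:
  assumes "0 \<le> vbar" and "0 \<le> \<rho>" and [measurable]: "\<pi> \<in> borel_measurable borel"
  shows "admissible I vbar \<rho> F G T (budgeted_throttle vbar \<rho> T \<pi>)"
proof -
  have [measurable]: "Measurable.pred (rounds T) (\<lambda>x. decision I (budgeted_throttle vbar \<rho> T \<pi>) x t)"
    "(\<lambda>x. max 0 (fst (x t) - fst (snd (x t)))) \<in> borel_measurable (rounds T)"
    if "t \<in> {..<T}" for t
    using that by (auto intro!: measurable_decision_budgeted_throttle measurable_round_curried)
  have "revenue I (budgeted_throttle vbar \<rho> T \<pi>) T \<in> borel_measurable (rounds T)"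
    unfolding revenue_def[abs_def] by measurable
  then show ?thesis
    using assms by (simp add: admissible_def sample_space_eq_PiM budget_feasible_budgeted_throttle)
qed

end

section \<open>Bounds on the value of the optimal throttling strategy\<close>

lemma sqrt_T_ln_T_ge_1:
  assumes "3 \<le> (T::real)"
  shows "1 \<le> sqrt (T * ln T)"
proof -
  have "1 \<le> ln (3::real)"
    using exp_le by (subst ln_ge_iff) auto
  also have "\<dots> \<le> ln T" using assms by simp
  finally have "1 * 1 \<le> T * ln T" using assms by (intro mult_mono) auto
  then show ?thesis by simp
qed

lemma hoeffding_loss_le_sqrt_T_ln_T:
  assumes "3 \<le> (T::real)" and "0 < vbar"
  shows "T * vbar * exp (- 2 * (vbar * sqrt (T * ln T))\<^sup>2 / (T * vbar\<^sup>2)) \<le> vbar * sqrt (T * ln T)"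
proof -
  have "0 \<le> ln T" using assms(1) by simp
  then have "- 2 * (vbar * sqrt (T * ln T))\<^sup>2 / (T * vbar\<^sup>2) = - 2 * ln T"
    using assms by (simp add: power_mult_distrib field_simps)
  moreover have "exp (- 2 * ln T) = 1 / (exp (ln T) * exp (ln T))"
    by (simp add: exp_minus inverse_eq_divide flip: exp_add)
  ultimately have "T * vbar * exp (- 2 * (vbar * sqrt (T * ln T))\<^sup>2 / (T * vbar\<^sup>2)) = vbar / T"
    using assms(1) by simp
  also have "\<dots> \<le> vbar * 1" using assms by (simp add: divide_le_eq)
  also have "\<dots> \<le> vbar * sqrt (T * ln T)"
    using assms by (intro mult_left_mono sqrt_T_ln_T_ge_1) auto
  finally show ?thesis .
qed

definition abstain :: strategy where
  "abstain t h v \<gamma> = False"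

lemma revenue_abstain: "revenue I abstain T = (\<lambda>_. 0)"
  by (simp add: fun_eq_iff revenue_def decision_unfold abstain_def)

lemma admissible_abstain: "0 \<le> \<rho> \<Longrightarrow> admissible I vbar \<rho> F G T abstain"
  by (simp add: admissible_def budget_feasible_def revenue_abstain payment_def decision_unfold
      abstain_def)

locale bounded_value_price_distrs = value_price_distrs +
  fixes vbar :: real
  assumes vbar_pos: "0 < vbar"
    and F_support: "measure F {0..vbar} = 1" and G_support: "measure G {0..vbar} = 1"
begin

lemma AE_F: "AE v in F. v \<in> {0..vbar}"
proof -
  interpret prob_space F by (rule prob_space_F)
  show ?thesis by (subst AE_in_set_eq_1) (simp_all add: F_support)
qed

lemma AE_G: "AE p in G. p \<in> {0..vbar}"
proof -
  interpret prob_space G by (rule prob_space_G)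
  show ?thesis by (subst AE_in_set_eq_1) (simp_all add: G_support)
qed

lemma AE_pair_F_G: "AE z in F \<Otimes>\<^sub>M G. fst z \<in> {0..vbar} \<and> snd z \<in> {0..vbar}"
proof -
  interpret pair_sigma_finite F G
    by (intro pair_sigma_finite.intro prob_space_imp_sigma_finite prob_space_F prob_space_G)
  show ?thesis
  proof (rule AE_pair_measure)
    show "AE v in F. AE p in G. fst (v, p) \<in> {0..vbar} \<and> snd (v, p) \<in> {0..vbar}"
      by (rule eventually_mono[OF AE_F], rule eventually_mono[OF AE_G]) simp
  qed measurable
qed

lemma AE_round_in_range: "AE y in round_distr F G. round_in_range vbar y"
proof -
  interpret GU: pair_sigma_finite G unif01
    by (intro pair_sigma_finite.intro prob_space_imp_sigma_finite prob_space_G prob_space_unif01)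
  interpret pair_sigma_finite F "G \<Otimes>\<^sub>M unif01"
    by (intro pair_sigma_finite.intro prob_space_imp_sigma_finite prob_space_F
        prob_space_pair prob_space_G prob_space_unif01)
  have GU: "AE w in G \<Otimes>\<^sub>M unif01. fst w \<in> {0..vbar} \<and> snd w \<in> {0..1}"
  proof (rule GU.AE_pair_measure)
    show "AE p in G. AE \<gamma> in unif01. fst (p, \<gamma>) \<in> {0..vbar} \<and> snd (p, \<gamma>) \<in> {0..1}"
      by (rule eventually_mono[OF AE_G], rule eventually_mono[OF AE_unif01]) simp
  qed measurable
  show ?thesis unfolding round_distr_def round_in_range_def
  proof (rule AE_pair_measure)
    show "AE v in F. AE w in G \<Otimes>\<^sub>M unif01. fst (v, w) \<in> {0..vbar} \<and>
        fst (snd (v, w)) \<in> {0..vbar} \<and> snd (snd (v, w)) \<in> {0..1}"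
      by (rule eventually_mono[OF AE_F], rule eventually_mono[OF GU]) simp
  qed measurable
qed

lemma AE_rounds_in_range: "AE x in rounds T. \<forall>t<T. round_in_range vbar (x t)"
proof -
  have "AE x in rounds T. \<forall>t\<in>{..<T}. round_in_range vbar (x t)"
    by (intro eventually_ball_finite ballI AE_PiM_component prob_space_round_distr AE_round_in_range)
      auto
  then show ?thesis by (rule eventually_mono) simp
qed

lemma lp_payment_eq_clipped_charge:
  "\<pi> \<in> borel_measurable borel \<Longrightarrow>
     lp_payment F G \<pi> = integral\<^sup>L (F \<Otimes>\<^sub>M G) (\<lambda>z. \<pi> (fst z) * clipped_charge vbar (fst z) (snd z))"
  unfolding lp_payment_def
  by (rule integral_cong_AE) (measurable, auto simp: clipped_charge_def intro!: eventually_mono[OF AE_pair_F_G])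

lemma lp_revenue_le_vbar:
  assumes [measurable]: "\<pi> \<in> borel_measurable borel" and \<pi>_bounds: "\<And>v. 0 \<le> \<pi> v \<and> \<pi> v \<le> 1"
  shows "lp_revenue F G \<pi> \<le> vbar"
proof -
  interpret prob_space "F \<Otimes>\<^sub>M G" by (rule prob_space_pair_F_G)
  let ?f = "\<lambda>(v, p). \<pi> v * max 0 (v - p)"
  have bound: "AE z in F \<Otimes>\<^sub>M G. 0 \<le> ?f z \<and> ?f z \<le> vbar"
  proof (rule eventually_mono[OF AE_pair_F_G])
    fix z :: "real \<times> real"
    assume "fst z \<in> {0..vbar} \<and> snd z \<in> {0..vbar}"
    moreover have "\<pi> (fst z) * max 0 (fst z - snd z) \<le> 1 * vbar" if "fst z \<le> vbar" "0 \<le> snd z"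
      using \<pi>_bounds[of "fst z"] that vbar_pos by (intro mult_mono) auto
    ultimately show "0 \<le> ?f z \<and> ?f z \<le> vbar"
      using \<pi>_bounds[of "fst z"] by (auto simp: case_prod_beta')
  qed
  have "integrable (F \<Otimes>\<^sub>M G) ?f"
  proof (rule integrable_const_bound[where B = vbar])
    show "AE z in F \<Otimes>\<^sub>M G. norm (?f z) \<le> vbar" using bound by (rule eventually_mono) auto
  qed measurable
  moreover have "AE z in F \<Otimes>\<^sub>M G. ?f z \<le> vbar" using bound by (rule eventually_mono) auto
  ultimately have "lp_revenue F G \<pi> \<le> integral\<^sup>L (F \<Otimes>\<^sub>M G) (\<lambda>_. vbar)"
    unfolding lp_revenue_def by (intro integral_mono_AE) auto
  then show ?thesis by (simp add: prob_space)
qed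

lemma bdd_above_lp_revenue: "bdd_above (lp_revenue F G ` Collect (lp_feasible F G \<rho>))"
  by (rule bdd_aboveI[where M = vbar]) (auto simp: lp_feasible_def intro!: lp_revenue_le_vbar)

lemma integral_revenue_eq_lp_revenue:
  assumes adm: "admissible I vbar \<rho> F G T \<beta>"
  shows "integral\<^sup>L (rounds T) (revenue I \<beta> T) = real T * lp_revenue F G (avg_accept_prob I \<beta> T)"
proof -
  note D = measurable_decision_admissible[OF adm]
  note [measurable] = measurable_avg_accept_prob[OF D]
  have "revenue I \<beta> T \<in> borel_measurable (rounds T)"
    using adm by (simp add: admissible_def sample_space_eq_PiM)
  then have "integral\<^sup>L (rounds T) (revenue I \<beta> T) = enn2real (\<integral>\<^sup>+x. ennreal (revenue I \<beta> T x) \<partial>rounds T)"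
    by (rule integral_eq_nn_integral) (auto simp: revenue_def intro!: sum_nonneg)
  also have "(\<integral>\<^sup>+x. ennreal (revenue I \<beta> T x) \<partial>rounds T)
      = ennreal (real T) * (\<integral>\<^sup>+z. ennreal (avg_accept_prob I \<beta> T (fst z) * max 0 (fst z - snd z)) \<partial>(F \<Otimes>\<^sub>M G))"
    unfolding revenue_def
    by (rule nn_integral_sum_decisions[OF D, where g = "\<lambda>v p. max 0 (v - p)"]) auto
  moreover have "lp_revenue F G (avg_accept_prob I \<beta> T)
      = enn2real (\<integral>\<^sup>+z. ennreal (avg_accept_prob I \<beta> T (fst z) * max 0 (fst z - snd z)) \<partial>(F \<Otimes>\<^sub>M G))"
    unfolding lp_revenue_def
    by (subst integral_eq_nn_integral) (auto simp: avg_accept_prob_bounds case_prod_beta')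
  ultimately show ?thesis by (simp add: enn2real_mult)
qed

lemma lp_payment_avg_accept_prob_le:
  assumes adm: "admissible I vbar \<rho> F G T \<beta>" and "0 < T" and "0 \<le> \<rho>"
  shows "lp_payment F G (avg_accept_prob I \<beta> T) \<le> \<rho>"
proof -
  interpret prob_space "rounds T" by (rule prob_space_PiM_round_distr)
  note D = measurable_decision_admissible[OF adm]
  note [measurable] = measurable_avg_accept_prob[OF D]
  let ?charge = "\<lambda>z. avg_accept_prob I \<beta> T (fst z) * clipped_charge vbar (fst z) (snd z)"
  have "ennreal (real T) * (\<integral>\<^sup>+z. ennreal (?charge z) \<partial>(F \<Otimes>\<^sub>M G))
      = (\<integral>\<^sup>+x. ennreal (\<Sum>t<T. if decision I \<beta> x t
          then clipped_charge vbar (fst (x t)) (fst (snd (x t))) else 0) \<partial>rounds T)"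
    using vbar_pos by (intro nn_integral_sum_decisions[OF D, symmetric]) (auto simp: clipped_charge_bounds)
  also have "\<dots> \<le> (\<integral>\<^sup>+x. ennreal (\<rho> * real T) \<partial>rounds T)"
  proof (rule nn_integral_mono_AE, rule eventually_mono[OF AE_rounds_in_range])
    fix x assume "\<forall>t<T. round_in_range vbar (x t)"
    moreover have "budget_feasible I vbar \<rho> T \<beta>" using adm by (simp add: admissible_def)
    ultimately show "ennreal (\<Sum>t<T. if decision I \<beta> x t then clipped_charge vbar (fst (x t)) (fst (snd (x t))) else 0)
        \<le> ennreal (\<rho> * real T)"
      by (simp add: budget_feasible_iff payment_eq_sum_clipped_charge[symmetric] ennreal_leI)
  qed
  also have "\<dots> = ennreal (real T) * ennreal \<rho>"
    using \<open>0 \<le> \<rho>\<close> by (simp add: emeasure_space_1 ennreal_mult mult.commute)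
  finally have "(\<integral>\<^sup>+z. ennreal (?charge z) \<partial>(F \<Otimes>\<^sub>M G)) \<le> ennreal \<rho>"
    using \<open>0 < T\<close> by (simp add: ennreal_mult_le_mult_iff)
  moreover have "lp_payment F G (avg_accept_prob I \<beta> T) = enn2real (\<integral>\<^sup>+z. ennreal (?charge z) \<partial>(F \<Otimes>\<^sub>M G))"
    using vbar_pos
    by (simp add: lp_payment_eq_clipped_charge integral_eq_nn_integral avg_accept_prob_bounds
        clipped_charge_bounds)
  ultimately show ?thesis
    using \<open>0 \<le> \<rho>\<close> by (simp add: enn2real_leI)
qed

lemma integral_revenue_le_OPT:
  assumes adm: "admissible I vbar \<rho> F G T \<beta>" and "0 \<le> \<rho>"
  shows "integral\<^sup>L (sample_space F G T) (revenue I \<beta> T) \<le> OPT F G \<rho> T"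
proof (cases "T = 0")
  case True
  moreover have "revenue I \<beta> 0 = (\<lambda>_. 0)" by (simp add: fun_eq_iff revenue_def)
  ultimately show ?thesis by (simp add: OPT_def)
next
  case False
  have "lp_feasible F G \<rho> (avg_accept_prob I \<beta> T)"
    using measurable_avg_accept_prob[OF measurable_decision_admissible[OF adm]] avg_accept_prob_bounds
      lp_payment_avg_accept_prob_le[OF adm] False \<open>0 \<le> \<rho>\<close>
    by (simp add: lp_feasible_def)
  then have "lp_revenue F G (avg_accept_prob I \<beta> T) \<le> (SUP \<pi>\<in>Collect (lp_feasible F G \<rho>). lp_revenue F G \<pi>)"
    by (intro cSUP_upper bdd_above_lp_revenue) simp
  then show ?thesis
    by (simp add: sample_space_eq_PiM integral_revenue_eq_lp_revenue[OF adm] OPT_eq_SUP mult_left_mono)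
qed

lemma integral_unconstrained_charge:
  assumes "t < T" and [measurable]: "a \<in> borel_measurable borel" and a_bounds: "\<And>v. 0 \<le> a v \<and> a v \<le> 1"
  shows "integral\<^sup>L (rounds T) (\<lambda>x. unconstrained_charge vbar a (x t)) = lp_payment F G a"
proof -
  have "unconstrained_charge vbar a \<in> borel_measurable (round_distr F G)"
    using measurable_unconstrained_charge[of a vbar]
    by (simp add: measurable_cong_sets[OF sets_round_distr refl])
  then have "integral\<^sup>L (rounds T) (\<lambda>x. unconstrained_charge vbar a (x t))
      = integral\<^sup>L (round_distr F G) (unconstrained_charge vbar a)"
    by (rule integral_rounds_component[OF \<open>t < T\<close>])
  also have "\<dots> = integral\<^sup>L (F \<Otimes>\<^sub>M G) (\<lambda>z. a (fst z) * clipped_charge vbar (fst z) (snd z))"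
    unfolding unconstrained_charge_def
    by (rule integral_round_distr_threshold[OF _ a_bounds measurable_clipped_charge])
      (use vbar_pos clipped_charge_bounds in auto)
  finally show ?thesis by (simp add: lp_payment_eq_clipped_charge)
qed

lemma integral_unconstrained_revenue:
  assumes "t < T" and [measurable]: "a \<in> borel_measurable borel" and a_bounds: "\<And>v. 0 \<le> a v \<and> a v \<le> 1"
  shows "integral\<^sup>L (rounds T) (\<lambda>x. unconstrained_revenue a (x t)) = lp_revenue F G a"
proof -
  have "unconstrained_revenue a \<in> borel_measurable (round_distr F G)"
    using measurable_unconstrained_revenue[of a] by (simp add: measurable_cong_sets[OF sets_round_distr refl])
  then have "integral\<^sup>L (rounds T) (\<lambda>x. unconstrained_revenue a (x t))
      = integral\<^sup>L (round_distr F G) (unconstrained_revenue a)"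
    by (rule integral_rounds_component[OF \<open>t < T\<close>])
  also have "\<dots> = integral\<^sup>L (F \<Otimes>\<^sub>M G) (\<lambda>z. a (fst z) * max 0 (fst z - snd z))"
    unfolding unconstrained_revenue_def
    by (rule integral_round_distr_threshold[OF _ a_bounds, where g = "\<lambda>v p. max 0 (v - p)"]) auto
  finally show ?thesis by (simp add: lp_revenue_def case_prod_beta')
qed

lemma integrable_rounds_bounded:
  fixes f :: "outcome \<Rightarrow> real"
  assumes "f \<in> borel_measurable (rounds T)"
    and "\<And>x. \<forall>t<T. round_in_range vbar (x t) \<Longrightarrow> \<bar>f x\<bar> \<le> B"
  shows "integrable (rounds T) f"
proof -
  interpret prob_space "rounds T" by (rule prob_space_PiM_round_distr)
  show ?thesis
  proof (rule integrable_const_bound[OF _ assms(1)])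
    show "AE x in rounds T. norm (f x) \<le> B"
      using AE_rounds_in_range by (rule eventually_mono) (simp add: assms(2))
  qed
qed

lemma prob_budget_binding_le:
  assumes "0 < T" and [measurable]: "a \<in> borel_measurable borel" and a_bounds: "\<And>v. 0 \<le> a v \<and> a v \<le> 1"
    and "0 \<le> e" and reserve: "real T * lp_payment F G a + e \<le> \<rho> * real T - vbar"
  shows "measure (rounds T)
      {x \<in> space (rounds T). \<rho> * real T < (\<Sum>t<T. unconstrained_charge vbar a (x t)) + vbar}
    \<le> exp (- 2 * e\<^sup>2 / (real T * vbar\<^sup>2))"
proof -
  interpret prob_space "rounds T" by (rule prob_space_PiM_round_distr)
  let ?Y = "\<lambda>t x. unconstrained_charge vbar a (x t)"
  have "unconstrained_charge vbar a \<in> borel_measurable (round_distr F G)"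
    using measurable_unconstrained_charge[of a vbar]
    by (simp add: measurable_cong_sets[OF sets_round_distr refl])
  then have "indep_vars (\<lambda>_. borel) ?Y {..<T}"
    by (intro indep_vars_compose2[OF indep_vars_rounds[OF \<open>0 < T\<close>]])
  then interpret Hoeffding_ineq "rounds T" "{..<T}" ?Y "\<lambda>_. 0" "\<lambda>_. vbar" "\<Sum>t<T. expectation (?Y t)"
    by unfold_locales (use vbar_pos in \<open>auto simp: unconstrained_charge_bounds\<close>)
  have "(\<Sum>t<T. expectation (?Y t)) = real T * lp_payment F G a"
    by (simp add: integral_unconstrained_charge a_bounds)
  then have "{x \<in> space (rounds T). \<rho> * real T < (\<Sum>t<T. ?Y t x) + vbar}
      \<subseteq> {x \<in> space (rounds T). (\<Sum>t<T. ?Y t x) \<ge> (\<Sum>t<T. expectation (?Y t)) + e}"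
    using reserve by auto
  then have "prob {x \<in> space (rounds T). \<rho> * real T < (\<Sum>t<T. ?Y t x) + vbar}
      \<le> prob {x \<in> space (rounds T). (\<Sum>t<T. ?Y t x) \<ge> (\<Sum>t<T. expectation (?Y t)) + e}"
    by (intro finite_measure_mono) measurable
  also have "\<dots> \<le> exp (- 2 * e\<^sup>2 / (real T * vbar\<^sup>2))"
    using Hoeffding_ineq_ge[OF \<open>0 \<le> e\<close>] \<open>0 < T\<close> vbar_pos by simp
  finally show ?thesis .
qed

lemma integral_sum_unconstrained_revenue:
  assumes [measurable]: "a \<in> borel_measurable borel" and a_bounds: "\<And>v. 0 \<le> a v \<and> a v \<le> 1"
  shows "integrable (rounds T) (\<lambda>x. \<Sum>t<T. unconstrained_revenue a (x t))"
    and "integral\<^sup>L (rounds T) (\<lambda>x. \<Sum>t<T. unconstrained_revenue a (x t)) = real T * lp_revenue F G a"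
proof -
  have int: "integrable (rounds T) (\<lambda>x. unconstrained_revenue a (x t))" if "t \<in> {..<T}" for t
  proof (rule integrable_rounds_bounded[where B = vbar])
    show "(\<lambda>x. unconstrained_revenue a (x t)) \<in> borel_measurable (rounds T)"
      using that measurable_round[of t T] measurable_unconstrained_revenue[of a]
      by (auto intro: measurable_compose)
  next
    fix x :: outcome
    assume "\<forall>t<T. round_in_range vbar (x t)"
    then show "\<bar>unconstrained_revenue a (x t)\<bar> \<le> vbar"
      using that unconstrained_revenue_bounds[of vbar "x t" a] by simp
  qed
  then show "integrable (rounds T) (\<lambda>x. \<Sum>t<T. unconstrained_revenue a (x t))"
    by (rule Bochner_Integration.integrable_sum)
  have "integral\<^sup>L (rounds T) (\<lambda>x. \<Sum>t<T. unconstrained_revenue a (x t))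
      = (\<Sum>t<T. integral\<^sup>L (rounds T) (\<lambda>x. unconstrained_revenue a (x t)))"
    by (rule Bochner_Integration.integral_sum) (rule int)
  then show "integral\<^sup>L (rounds T) (\<lambda>x. \<Sum>t<T. unconstrained_revenue a (x t)) = real T * lp_revenue F G a"
    by (simp add: integral_unconstrained_revenue a_bounds)
qed

lemma integral_revenue_budgeted_throttle_ge:
  assumes "0 < T" and "0 \<le> \<rho>" and a [measurable]: "a \<in> borel_measurable borel"
    and a_bounds: "\<And>v. 0 \<le> a v \<and> a v \<le> 1"
    and "0 \<le> e" and reserve: "real T * lp_payment F G a + e \<le> \<rho> * real T - vbar"
  shows "real T * lp_revenue F G a - real T * vbar * exp (- 2 * e\<^sup>2 / (real T * vbar\<^sup>2))
    \<le> integral\<^sup>L (rounds T) (revenue I (budgeted_throttle vbar \<rho> T a) T)"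
proof -
  interpret prob_space "rounds T" by (rule prob_space_PiM_round_distr)
  let ?rev = "revenue I (budgeted_throttle vbar \<rho> T a) T"
  let ?R = "\<lambda>x. \<Sum>t<T. unconstrained_revenue a (x t)"
  define binding where
    "binding = {x \<in> space (rounds T). \<rho> * real T < (\<Sum>t<T. unconstrained_charge vbar a (x t)) + vbar}"
  have [measurable]: "(\<lambda>x. unconstrained_charge vbar a (x t)) \<in> borel_measurable (rounds T)"
    if "t \<in> {..<T}" for t
    using that measurable_round[of t T] measurable_unconstrained_charge[of a vbar]
    by (auto intro: measurable_compose)
  have binding [measurable]: "binding \<in> sets (rounds T)"
    unfolding binding_def by measurable
  have binding_int: "integrable (rounds T) (\<lambda>x. real T * vbar * indicator binding x)"
    by (intro integrable_mult_right integrable_real_indicator binding) (simp add: less_top[symmetric])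
  have rev_int: "integrable (rounds T) ?rev"
    using admissible_budgeted_throttle[of vbar \<rho> a I T] vbar_pos \<open>0 \<le> \<rho>\<close> revenue_bounds
    by (intro integrable_rounds_bounded[where B = "real T * vbar"])
      (auto simp: admissible_def sample_space_eq_PiM abs_le_iff)
  note R = integral_sum_unconstrained_revenue[OF a a_bounds]
  have "AE x in rounds T. ?R x - real T * vbar * indicator binding x \<le> ?rev x"
    using AE_space AE_rounds_in_range
  proof eventually_elim
    case (elim x)
    then show ?case
      using revenue_budgeted_throttle_ge[OF less_imp_le[OF vbar_pos], of T x a \<rho> I]
      by (auto simp: binding_def split: if_splits)
  qed
  then have "integral\<^sup>L (rounds T) (\<lambda>x. ?R x - real T * vbar * indicator binding x)
      \<le> integral\<^sup>L (rounds T) ?rev"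
    using R rev_int binding_int by (intro integral_mono_AE) auto
  moreover have "integral\<^sup>L (rounds T) (\<lambda>x. ?R x - real T * vbar * indicator binding x)
      = real T * lp_revenue F G a - real T * vbar * prob binding"
    using R binding_int by simp
  moreover have "prob binding \<le> exp (- 2 * e\<^sup>2 / (real T * vbar\<^sup>2))"
    unfolding binding_def by (rule prob_budget_binding_le) fact+
  ultimately show ?thesis
    using vbar_pos mult_left_mono[of "prob binding" _ "real T * vbar"] by fastforce
qed

lemma thr_value_bounds:
  assumes "0 \<le> \<rho>"
  shows "thr_value I vbar \<rho> F G T \<le> OPT F G \<rho> T"
    and "admissible I vbar \<rho> F G T \<beta> \<Longrightarrow>
      integral\<^sup>L (sample_space F G T) (revenue I \<beta> T) \<le> thr_value I vbar \<rho> F G T"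
proof -
  let ?values = "(\<lambda>\<beta>. integral\<^sup>L (sample_space F G T) (revenue I \<beta> T)) ` Collect (admissible I vbar \<rho> F G T)"
  have "?values \<noteq> {}" using admissible_abstain[OF assms] by blast
  moreover have upper: "\<And>y. y \<in> ?values \<Longrightarrow> y \<le> OPT F G \<rho> T"
    using integral_revenue_le_OPT[OF _ assms] by blast
  ultimately show "thr_value I vbar \<rho> F G T \<le> OPT F G \<rho> T"
    unfolding thr_value_def by (intro cSup_least) auto
  show "integral\<^sup>L (sample_space F G T) (revenue I \<beta> T) \<le> thr_value I vbar \<rho> F G T"
    if "admissible I vbar \<rho> F G T \<beta>"
    unfolding thr_value_def using that upper by (intro cSup_upper bdd_aboveI) auto
qed

lemma thr_value_nonneg: "0 \<le> \<rho> \<Longrightarrow> 0 \<le> thr_value I vbar \<rho> F G T"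
  using thr_value_bounds(2)[OF _ admissible_abstain] by (simp add: revenue_abstain)

lemma thr_value_ge_scaled_lp_revenue:
  assumes "0 < \<rho>" and "0 < T" and feasible: "lp_feasible F G \<rho> \<pi>" and "0 \<le> q" "q \<le> 1"
    and "0 \<le> e" and reserve: "q * \<rho> * real T + e \<le> \<rho> * real T - vbar"
  shows "real T * q * lp_revenue F G \<pi> - real T * vbar * exp (- 2 * e\<^sup>2 / (real T * vbar\<^sup>2))
    \<le> thr_value I vbar \<rho> F G T"
proof -
  have [measurable]: "\<pi> \<in> borel_measurable borel" and \<pi>_bounds: "\<And>v. 0 \<le> \<pi> v \<and> \<pi> v \<le> 1"
    and "lp_payment F G \<pi> \<le> \<rho>"
    using feasible by (auto simp: lp_feasible_def)
  have scaled_bounds: "0 \<le> q * \<pi> v \<and> q * \<pi> v \<le> 1" for v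
    using \<pi>_bounds[of v] \<open>0 \<le> q\<close> \<open>q \<le> 1\<close> by (auto intro: mult_le_one)
  have "q * (real T * lp_payment F G \<pi>) \<le> q * (real T * \<rho>)"
    using \<open>lp_payment F G \<pi> \<le> \<rho>\<close> \<open>0 \<le> q\<close> by (intro mult_left_mono) auto
  then have "real T * lp_payment F G (\<lambda>v. q * \<pi> v) \<le> q * \<rho> * real T"
    by (simp add: lp_payment_scale algebra_simps)
  then have "real T * lp_revenue F G (\<lambda>v. q * \<pi> v) - real T * vbar * exp (- 2 * e\<^sup>2 / (real T * vbar\<^sup>2))
      \<le> integral\<^sup>L (rounds T) (revenue I (budgeted_throttle vbar \<rho> T (\<lambda>v. q * \<pi> v)) T)"
    using \<open>0 < \<rho>\<close> reserve
    by (intro integral_revenue_budgeted_throttle_ge[OF \<open>0 < T\<close> _ _ scaled_bounds \<open>0 \<le> e\<close>]) auto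
  also have "\<dots> \<le> thr_value I vbar \<rho> F G T"
    using \<open>0 < \<rho>\<close> vbar_pos
    by (simp add: thr_value_bounds(2) admissible_budgeted_throttle flip: sample_space_eq_PiM)
  finally show ?thesis by (simp add: lp_revenue_scale mult.assoc)
qed

lemma thr_value_ge_lp_revenue_minus_reserve:
  assumes "0 < \<rho>" and "3 \<le> T" and feasible: "lp_feasible F G \<rho> \<pi>"
  defines "s \<equiv> sqrt (real T * ln (real T))"
  assumes enough_budget: "vbar * s + vbar \<le> \<rho> * real T"
  shows "real T * lp_revenue F G \<pi> - vbar * (vbar * s + vbar) / \<rho> - vbar * s \<le> thr_value I vbar \<rho> F G T"
proof -
  define q where "q = 1 - (vbar * s + vbar) / (\<rho> * real T)"
  have "1 \<le> s" unfolding s_def using \<open>3 \<le> T\<close> by (intro sqrt_T_ln_T_ge_1) simp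
  have "0 < \<rho> * real T" using \<open>0 < \<rho>\<close> \<open>3 \<le> T\<close> by simp
  have "q * (\<rho> * real T) = \<rho> * real T - (vbar * s + vbar)"
    using \<open>0 < \<rho>\<close> \<open>3 \<le> T\<close> by (simp add: q_def left_diff_distrib)
  then have q: "0 \<le> q" "q \<le> 1" "q * \<rho> * real T + vbar * s = \<rho> * real T - vbar"
    using enough_budget vbar_pos \<open>1 \<le> s\<close> \<open>0 < \<rho> * real T\<close> by (auto simp: q_def divide_le_eq_1 mult.assoc)
  have "real T * q * lp_revenue F G \<pi> - real T * vbar * exp (- 2 * (vbar * s)\<^sup>2 / (real T * vbar\<^sup>2))
      \<le> thr_value I vbar \<rho> F G T"
    using \<open>0 < \<rho>\<close> \<open>3 \<le> T\<close> vbar_pos \<open>1 \<le> s\<close> q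
    by (intro thr_value_ge_scaled_lp_revenue[OF _ _ feasible]) auto
  moreover have "real T * vbar * exp (- 2 * (vbar * s)\<^sup>2 / (real T * vbar\<^sup>2)) \<le> vbar * s"
    unfolding s_def using \<open>3 \<le> T\<close> vbar_pos by (intro hoeffding_loss_le_sqrt_T_ln_T) auto
  moreover have "real T * q * lp_revenue F G \<pi>
      = real T * lp_revenue F G \<pi> - (vbar * s + vbar) * lp_revenue F G \<pi> / \<rho>"
    using \<open>0 < \<rho>\<close> \<open>3 \<le> T\<close> by (simp add: q_def field_simps)
  moreover have "(vbar * s + vbar) * lp_revenue F G \<pi> \<le> (vbar * s + vbar) * vbar"
    using feasible vbar_pos \<open>1 \<le> s\<close> by (intro mult_left_mono) (auto simp: lp_feasible_def lp_revenue_le_vbar)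
  then have "(vbar * s + vbar) * lp_revenue F G \<pi> / \<rho> \<le> vbar * (vbar * s + vbar) / \<rho>"
    using \<open>0 < \<rho>\<close> by (simp add: divide_right_mono mult.commute)
  ultimately show ?thesis by linarith
qed

lemma lp_revenue_le_thr_value:
  assumes "0 < \<rho>" and "3 \<le> T" and feasible: "lp_feasible F G \<rho> \<pi>"
  defines "s \<equiv> sqrt (real T * ln (real T))"
  shows "real T * lp_revenue F G \<pi> - (vbar + 2 * vbar\<^sup>2 / \<rho>) * s \<le> thr_value I vbar \<rho> F G T"
proof -
  have "1 \<le> s" unfolding s_def using \<open>3 \<le> T\<close> by (intro sqrt_T_ln_T_ge_1) simp
  then have "vbar * (vbar * s + vbar) / \<rho> \<le> 2 * vbar\<^sup>2 / \<rho> * s" and "0 \<le> vbar * s"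
    using vbar_pos \<open>0 < \<rho>\<close> by (simp_all add: field_simps power2_eq_square mult_left_mono)
  moreover have "(vbar + 2 * vbar\<^sup>2 / \<rho>) * s = vbar * s + 2 * vbar\<^sup>2 / \<rho> * s"
    by (simp add: distrib_right)
  moreover have "real T * lp_revenue F G \<pi> - vbar * (vbar * s + vbar) / \<rho> - vbar * s \<le> thr_value I vbar \<rho> F G T"
  proof (cases "\<rho> * real T < vbar * s + vbar")
    case True
    have "real T * lp_revenue F G \<pi> \<le> real T * vbar"
      using feasible by (intro mult_left_mono) (auto simp: lp_feasible_def lp_revenue_le_vbar)
    also have "\<dots> = vbar * (\<rho> * real T) / \<rho>" using \<open>0 < \<rho>\<close> by simp
    also have "\<dots> \<le> vbar * (vbar * s + vbar) / \<rho>"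
      using True vbar_pos \<open>0 < \<rho>\<close> by (intro divide_right_mono mult_left_mono) auto
    finally show ?thesis
      using thr_value_nonneg[of \<rho> I T] \<open>0 < \<rho>\<close> \<open>0 \<le> vbar * s\<close> by linarith
  next
    case False
    then show ?thesis
      using thr_value_ge_lp_revenue_minus_reserve[OF assms(1-3)] by (simp add: s_def)
  qed
  ultimately show ?thesis by linarith
qed

lemma OPT_minus_le_thr_value:
  assumes "0 < \<rho>" and "3 \<le> T"
  shows "OPT F G \<rho> T - (vbar + 2 * vbar\<^sup>2 / \<rho>) * sqrt (real T * ln (real T)) \<le> thr_value I vbar \<rho> F G T"
proof -
  let ?slack = "(vbar + 2 * vbar\<^sup>2 / \<rho>) * sqrt (real T * ln (real T))"
  have "(SUP \<pi>\<in>Collect (lp_feasible F G \<rho>). lp_revenue F G \<pi>) \<le> (thr_value I vbar \<rho> F G T + ?slack) / real T"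
    using lp_feasible_zero[of \<rho> F G] lp_revenue_le_thr_value[OF assms] assms
    by (intro cSUP_least) (auto simp: pos_le_divide_eq algebra_simps)
  then show ?thesis
    using assms by (simp add: OPT_eq_SUP pos_le_divide_eq algebra_simps)
qed

end

lemma bounded_value_price_distrs_of_valid_dist:
  "0 < vbar \<Longrightarrow> valid_dist vbar F \<Longrightarrow> valid_dist vbar G \<Longrightarrow> bounded_value_price_distrs F G vbar"
  by (simp add: valid_dist_def bounded_value_price_distrs_def bounded_value_price_distrs_axioms_def
      value_price_distrs_def)

theorem proposition1:
  fixes vbar \<rho> :: real
  assumes "0 < vbar" and "0 < \<rho>" and "\<rho> \<le> vbar"
  shows "(\<forall>I F G T. valid_dist vbar F \<longrightarrow> valid_dist vbar G \<longrightarrow>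
            thr_value I vbar \<rho> F G T \<le> OPT F G \<rho> T)
       \<and> (\<exists>C N. \<forall>I F G T. valid_dist vbar F \<longrightarrow> valid_dist vbar G \<longrightarrow> T \<ge> N \<longrightarrow>
            OPT F G \<rho> T - C * sqrt (real T * ln (real T)) \<le> thr_value I vbar \<rho> F G T)"
proof (intro conjI exI allI impI)
  fix I F G T
  assume "valid_dist vbar F" "valid_dist vbar G"
  then interpret bounded_value_price_distrs F G vbar
    by (rule bounded_value_price_distrs_of_valid_dist[OF assms(1)])
  show "thr_value I vbar \<rho> F G T \<le> OPT F G \<rho> T"
    using assms(2) by (simp add: thr_value_bounds(1))
  assume "T \<ge> 3"
  then show "OPT F G \<rho> T - (vbar + 2 * vbar\<^sup>2 / \<rho>) * sqrt (real T * ln (real T)) \<le> thr_value I vbar \<rho> F G T"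
    by (rule OPT_minus_le_thr_value[OF assms(2)])
qed

end
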